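(* Let $B$ be a finite set with $|B|\ge 2$ and let $f$ be an $\mathsf{E}$-shop on $B$, with $b\in B$ such that $b\in f(x)$ for all $x\in B$. Then $\langle f\rangle$ contains an $\mathsf{E}$-shop $g$ for which there is a partition of $B$ into sets $B',B''$ with $B'$ non-empty such that (1) $g(x)\supseteq\{x,b\}$ for all $x\in B'$; (2) $g(x)\supseteq\{b\}$ for all $x\in B''$; (3) for every $y\in B$ there exists $x\in B'$ with $y\in g(x)$.
   Context: A shop on $B$ is a map $f:B\to\mathcal{P}(B)\setminus\{\emptyset\}$ such that every $y\in B$ lies in $f(x)$ for some $x\in B$. An $\mathsf{E}$-shop is a shop $f$ for which some $b\in B$ satisfies $b\in f(x)$ for all $x\in B$. The identity shop is $x\mapsto\{x\}$; composition is $(g\circ f)(x)=\{z:\exists y\ (y\in f(x)\wedge z\in g(y))\}$; $f$ is a sub-shop of $g$ if $f(x)\subseteq g(x)$ for all $x$. A down-she-monoid (DSM) on $B$ is a set of shops on $B$ containing the identity, closed under composition and under taking sub-shops (that are shops). $\langle f\rangle$ denotes the smallest DSM containing $f$. *)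

theory Defs
  imports Main
begin

text \<open>Shops on a carrier B are represented as functions 'a => 'a set that are
  extensional: they take the value {} outside B.\<close>

definition shop :: "'a set \<Rightarrow> ('a \<Rightarrow> 'a set) \<Rightarrow> bool" where
  "shop B f \<longleftrightarrow> (\<forall>x\<in>B. f x \<subseteq> B \<and> f x \<noteq> {}) \<and> (\<forall>x. x \<notin> B \<longrightarrow> f x = {})
      \<and> (\<forall>y\<in>B. \<exists>x\<in>B. y \<in> f x)"

definition E_shop :: "'a set \<Rightarrow> ('a \<Rightarrow> 'a set) \<Rightarrow> bool" where
  "E_shop B f \<longleftrightarrow> shop B f \<and> (\<exists>b\<in>B. \<forall>x\<in>B. b \<in> f x)"

definition id_shop :: "'a set \<Rightarrow> 'a \<Rightarrow> 'a set" where
  "id_shop B = (\<lambda>x. if x \<in> B then {x} else {})"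

definition shop_comp :: "('a \<Rightarrow> 'a set) \<Rightarrow> ('a \<Rightarrow> 'a set) \<Rightarrow> 'a \<Rightarrow> 'a set" where
  "shop_comp g f = (\<lambda>x. {z. \<exists>y. y \<in> f x \<and> z \<in> g y})"

definition sub_shop :: "('a \<Rightarrow> 'a set) \<Rightarrow> ('a \<Rightarrow> 'a set) \<Rightarrow> bool" where
  "sub_shop f g \<longleftrightarrow> (\<forall>x. f x \<subseteq> g x)"

definition DSM :: "'a set \<Rightarrow> ('a \<Rightarrow> 'a set) set \<Rightarrow> bool" where
  "DSM B M \<longleftrightarrow> (\<forall>f\<in>M. shop B f) \<and> id_shop B \<in> M
     \<and> (\<forall>f\<in>M. \<forall>g\<in>M. shop_comp g f \<in> M)
     \<and> (\<forall>g\<in>M. \<forall>f. shop B f \<and> sub_shop f g \<longrightarrow> f \<in> M)"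

definition generated_DSM :: "'a set \<Rightarrow> ('a \<Rightarrow> 'a set) \<Rightarrow> ('a \<Rightarrow> 'a set) set" where
  "generated_DSM B f = \<Inter>{M. DSM B M \<and> f \<in> M}"

end

theory Submission
  imports Defs
begin

text \<open>Let \<open>n = card B\<close> and \<open>g = f\<^sup>n\<^sup>!\<close>. Every value \<open>g x\<close> contains \<open>b\<close>, so \<open>g\<close> is an
  \<open>E\<close>-shop in \<open>\<langle>f\<rangle>\<close>. Choose a preimage map \<open>p\<close> with \<open>y \<in> f (p y)\<close>; then \<open>y \<in> g (p\<^sup>n\<^sup>! y)\<close>.
  Since \<open>p\<close> is a self-map of an \<open>n\<close>-element set, \<open>p\<^sup>n\<^sup>!\<close> is idempotent, so \<open>x = p\<^sup>n\<^sup>! y\<close> satisfies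
  \<open>x \<in> g x\<close>. Hence the points \<open>x\<close> with \<open>x \<in> g x\<close> form the required part \<open>B'\<close>.\<close>

primrec shop_power :: "'a set \<Rightarrow> ('a \<Rightarrow> 'a set) \<Rightarrow> nat \<Rightarrow> 'a \<Rightarrow> 'a set" where
  "shop_power B f 0 = id_shop B"
| "shop_power B f (Suc k) = shop_comp f (shop_power B f k)"

lemma shop_id_shop: "shop B (id_shop B)"
  unfolding shop_def id_shop_def by auto

lemma shop_shop_comp:
  assumes f: "shop B f" and g: "shop B g"
  shows "shop B (shop_comp g f)"
proof -
  have "shop_comp g f x \<noteq> {}" if "x \<in> B" for x
  proof -
    obtain y where "y \<in> f x" "y \<in> B" using f \<open>x \<in> B\<close> unfolding shop_def by blast
    moreover obtain z where "z \<in> g y" using g \<open>y \<in> B\<close> unfolding shop_def by blast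
    ultimately show ?thesis unfolding shop_comp_def by blast
  qed
  moreover have "\<exists>x\<in>B. z \<in> shop_comp g f x" if "z \<in> B" for z
  proof -
    obtain y where "y \<in> B" "z \<in> g y" using g \<open>z \<in> B\<close> unfolding shop_def by blast
    moreover obtain x where "x \<in> B" "y \<in> f x" using f \<open>y \<in> B\<close> unfolding shop_def by blast
    ultimately show ?thesis unfolding shop_comp_def by blast
  qed
  moreover have "shop_comp g f x \<subseteq> B" if "x \<in> B" for x
    using f g \<open>x \<in> B\<close> unfolding shop_def shop_comp_def by blast
  moreover have "shop_comp g f x = {}" if "x \<notin> B" for x
    using f \<open>x \<notin> B\<close> unfolding shop_def shop_comp_def by simp
  ultimately show ?thesis
    unfolding shop_def by blast
qed

lemma shop_shop_power: "shop B f \<Longrightarrow> shop B (shop_power B f k)"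
  by (induction k) (simp_all add: shop_id_shop shop_shop_comp)

lemma shop_power_in_DSM:
  assumes "DSM B M" and "f \<in> M"
  shows "shop_power B f k \<in> M"
proof -
  have "id_shop B \<in> M"
    using \<open>DSM B M\<close> unfolding DSM_def by (elim conjE)
  moreover have "\<forall>f\<in>M. \<forall>g\<in>M. shop_comp g f \<in> M"
    using \<open>DSM B M\<close> unfolding DSM_def by (elim conjE)
  ultimately show ?thesis
    using \<open>f \<in> M\<close> by (induction k) simp_all
qed

lemma shop_power_in_generated_DSM: "shop_power B f k \<in> generated_DSM B f"
  unfolding generated_DSM_def by (auto intro: shop_power_in_DSM)

lemma common_point_shop_power:
  assumes common: "\<forall>x\<in>B. b \<in> f x" and "b \<in> B" and "x \<in> B"
  shows "b \<in> shop_power B f (Suc k) x"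
proof (induction k)
  case 0
  have "x \<in> id_shop B x" and "b \<in> f x"
    using common \<open>x \<in> B\<close> by (simp_all add: id_shop_def)
  then show ?case unfolding shop_power.simps shop_comp_def by blast
next
  case (Suc k)
  moreover have "b \<in> f b"
    using common \<open>b \<in> B\<close> by blast
  ultimately show ?case
    unfolding shop_power.simps(2)[of B f "Suc k"] shop_comp_def by blast
qed

lemma mem_shop_power_preimage:
  assumes "\<forall>y\<in>B. p y \<in> B \<and> y \<in> f (p y)" and "y \<in> B"
  shows "y \<in> shop_power B f k ((p ^^ k) y)"
  using \<open>y \<in> B\<close>
proof (induction k arbitrary: y)
  case 0
  then show ?case by (simp add: id_shop_def)
next
  case (Suc k)
  have "p y \<in> shop_power B f k ((p ^^ k) (p y))" and "y \<in> f (p y)"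
    using Suc.IH assms(1) Suc.prems by blast+
  moreover have orbit_step: "(p ^^ Suc k) y = (p ^^ k) (p y)"
    by (simp add: funpow_swap1)
  ultimately show ?case
    unfolding shop_power.simps shop_comp_def orbit_step by blast
qed

lemma funpow_in_set: "\<forall>y\<in>B. p y \<in> B \<Longrightarrow> y \<in> B \<Longrightarrow> (p ^^ k) y \<in> B"
  by (induction k) auto

lemma funpow_eventually_periodic:
  assumes "finite B" and "\<forall>y\<in>B. p y \<in> B" and "y \<in> B"
  obtains i k where "k > 0" "i + k \<le> card B" "(p ^^ (i + k)) y = (p ^^ i) y"
proof -
  let ?orbit = "\<lambda>i. (p ^^ i) y"
  have "?orbit ` {0..card B} \<subseteq> B"
    using funpow_in_set[OF assms(2,3)] by blast
  then have "card (?orbit ` {0..card B}) \<le> card B"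
    using \<open>finite B\<close> by (rule card_mono[rotated])
  then have "\<not> inj_on ?orbit {0..card B}"
    by (auto dest: card_image)
  then obtain i j where ij: "i < j" "j \<le> card B" "(p ^^ i) y = (p ^^ j) y"
    unfolding inj_on_def by (metis atLeastAtMost_iff linorder_neqE_nat)
  show ?thesis
  proof
    show "j - i > 0" "i + (j - i) \<le> card B" "(p ^^ (i + (j - i))) y = (p ^^ i) y"
      using ij by simp_all
  qed
qed

text \<open>With \<open>m = (card B)!\<close>: after at most \<open>card B\<close> steps every orbit of \<open>p\<close> enters a cycle,
  whose length divides \<open>m\<close>.\<close>

lemma funpow_fact_card_idem:
  assumes "finite B" and "\<forall>y\<in>B. p y \<in> B" and "y \<in> B"
  defines "m \<equiv> fact (card B)"
  shows "(p ^^ m) ((p ^^ m) y) = (p ^^ m) y"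
proof -
  obtain i k where k: "k > 0" "i + k \<le> card B" and cycle: "(p ^^ (i + k)) y = (p ^^ i) y"
    using funpow_eventually_periodic[OF assms(1-3)] by blast
  define z where "z = (p ^^ i) y"
  have "(p ^^ (k + i)) y = (p ^^ i) y"
    using cycle by (simp only: add.commute)
  then have "(p ^^ k) z = z"
    by (simp add: z_def funpow_add)
  moreover have "m mod k = 0"
    using k dvd_fact[of k "card B"] by (simp add: m_def)
  ultimately have z_fixed: "(p ^^ m) z = z"
    using funpow_mod_eq[where f=p and n=k and x=z and m=m] by simp
  have "i \<le> m"
    using k fact_ge_self[of "card B"] by (simp add: m_def)
  then have "m = (m - i) + i" by simp
  then have "(p ^^ m) y = (p ^^ (m - i)) z"
    unfolding z_def by (metis funpow_add comp_apply)
  moreover have "(p ^^ m) ((p ^^ (m - i)) z) = (p ^^ (m - i)) ((p ^^ m) z)"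
    by (metis funpow_add add.commute comp_apply)
  ultimately show ?thesis
    using z_fixed by simp
qed

lemma shop_power_fact_card_reflexive_preimage:
  assumes "finite B" and "shop B f" and "y \<in> B"
  defines "g \<equiv> shop_power B f (fact (card B))"
  shows "\<exists>x\<in>B. x \<in> g x \<and> y \<in> g x"
proof -
  have "\<forall>y\<in>B. \<exists>x\<in>B. y \<in> f x"
    using \<open>shop B f\<close> by (simp add: shop_def)
  then obtain p where p: "\<forall>y\<in>B. p y \<in> B \<and> y \<in> f (p y)"
    by metis
  then have p_into: "\<forall>y\<in>B. p y \<in> B" by blast
  define x where "x = (p ^^ fact (card B)) y"
  have "x \<in> B"
    using funpow_in_set[OF p_into \<open>y \<in> B\<close>] by (simp add: x_def)
  moreover have "x \<in> g x"
  proof -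
    have "x \<in> g ((p ^^ fact (card B)) x)"
      unfolding g_def by (rule mem_shop_power_preimage[OF p \<open>x \<in> B\<close>])
    moreover have "(p ^^ fact (card B)) x = x"
      unfolding x_def by (rule funpow_fact_card_idem[OF \<open>finite B\<close> p_into \<open>y \<in> B\<close>])
    ultimately show ?thesis by simp
  qed
  moreover have "y \<in> g x"
    unfolding g_def x_def by (rule mem_shop_power_preimage[OF p \<open>y \<in> B\<close>])
  ultimately show ?thesis by blast
qed

theorem lemma3p6:
  fixes B :: "'a set" and f :: "'a \<Rightarrow> 'a set" and b :: 'a
  assumes "finite B" and "card B \<ge> 2"
    and "E_shop B f" and "b \<in> B" and "\<forall>x\<in>B. b \<in> f x"
  shows "\<exists>g \<in> generated_DSM B f. E_shop B g \<and>
           (\<exists>B' B''. B' \<union> B'' = B \<and> B' \<inter> B'' = {} \<and> B' \<noteq> {} \<and>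
              (\<forall>x\<in>B'. {x, b} \<subseteq> g x) \<and>
              (\<forall>x\<in>B''. {b} \<subseteq> g x) \<and>
              (\<forall>y\<in>B. \<exists>x\<in>B'. y \<in> g x))"
proof -
  have f: "shop B f" using \<open>E_shop B f\<close> by (simp add: E_shop_def)
  define g where "g = shop_power B f (fact (card B))"
  obtain k where "fact (card B) = Suc k"
    using gr0_implies_Suc[OF fact_gt_zero] by blast
  then have b: "\<forall>x\<in>B. b \<in> g x"
    using common_point_shop_power[OF assms(5,4)] by (simp add: g_def)
  have "E_shop B g"
    using shop_shop_power[OF f] b \<open>b \<in> B\<close> unfolding E_shop_def g_def by blast
  define B' where "B' = {x \<in> B. x \<in> g x}"
  have cover: "\<forall>y\<in>B. \<exists>x\<in>B'. y \<in> g x"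
    using shop_power_fact_card_reflexive_preimage[OF \<open>finite B\<close> f]
    unfolding B'_def g_def by blast
  then have "B' \<noteq> {}" using \<open>b \<in> B\<close> by blast
  moreover have "\<forall>x\<in>B'. {x, b} \<subseteq> g x" and "\<forall>x\<in>B - B'. {b} \<subseteq> g x"
    using b unfolding B'_def by blast+
  moreover have "B' \<union> (B - B') = B" and "B' \<inter> (B - B') = {}"
    unfolding B'_def by blast+
  moreover have "g \<in> generated_DSM B f"
    unfolding g_def by (rule shop_power_in_generated_DSM)
  ultimately show ?thesis
    using \<open>E_shop B g\<close> cover by blast
qed

end
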